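(* Let $\varrho$ be the golden mean substitution on the alphabet $\{A,B\}$, $\varrho(A)=AB$, $\varrho(B)=A$, and let $\mathcal{F}_n=\varrho^n(A)$ for $n\ge 0$ (so $\mathcal{F}_{n+1}=\mathcal{F}_n\mathcal{F}_{n-1}$ for $n\ge1$), and let $\mathcal{F}_\infty$ be the infinite Fibonacci word, the limit of $\mathcal{F}_n$ (each $\mathcal{F}_n$ being a prefix of $\mathcal{F}_{n+1}$). Let $\mathcal{S}$ be a finite subword (a block of consecutive, whole letters) of $\mathcal{F}_\infty$. Then for every $n\ge 1$ with $|\mathcal{S}|\le|\mathcal{F}_{n-1}|$, $\mathcal{S}$ occurs as a subword of the bi-infinite periodic word $\cdots\mathcal{F}_n\mathcal{F}_n\mathcal{F}_n\cdots$ obtained by repeating $\mathcal{F}_n$ periodically.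
   Context: For a finite word $w$, $|w|$ denotes its number of letters (tiles). *)

theory Defs
  imports Main
begin

datatype letter = A | B

fun rho_letter :: "letter \<Rightarrow> letter list" where
  "rho_letter A = [A, B]"
| "rho_letter B = [A]"

definition rho :: "letter list \<Rightarrow> letter list" where
  "rho w = concat (map rho_letter w)"

definition Fib :: "nat \<Rightarrow> letter list" where
  "Fib n = (rho ^^ n) [A]"

definition Finf :: "nat \<Rightarrow> letter" where
  "Finf i = (THE c. \<exists>N. \<forall>n\<ge>N. i < length (Fib n) \<and> Fib n ! i = c)"

definition subword_Finf :: "letter list \<Rightarrow> bool" where
  "subword_Finf S \<longleftrightarrow> (\<exists>k. \<forall>i<length S. S ! i = Finf (k + i))"

text \<open>The bi-infinite periodic word ... w w w ..., indexed by the integers,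
  with position 0 being the first letter of one copy of w.\<close>
definition periodic_word :: "letter list \<Rightarrow> int \<Rightarrow> letter" where
  "periodic_word w j = w ! nat (j mod int (length w))"

definition subword_periodic :: "letter list \<Rightarrow> letter list \<Rightarrow> bool" where
  "subword_periodic S w \<longleftrightarrow> (\<exists>k::int. \<forall>i<length S. S ! i = periodic_word w (k + int i))"

end

theory Submission
  imports Defs "HOL-Library.Sublist"
begin

text \<open>Write \<open>F\<^sub>n\<close> for \<open>Fib n\<close>. Since \<open>F\<^sub>N = \<rho>\<^sup>n(F\<^sub>N\<^sub>-\<^sub>n)\<close>, every long \<open>F\<^sub>N\<close> is a
  concatenation of the blocks \<open>\<rho>\<^sup>n(A) = F\<^sub>n\<close> and \<open>\<rho>\<^sup>n(B) = F\<^sub>n\<^sub>-\<^sub>1\<close>, each of which begins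
  with \<open>F\<^sub>n\<^sub>-\<^sub>1\<close>. A factor of length at most \<open>|F\<^sub>n\<^sub>-\<^sub>1|\<close> therefore lies inside \<open>b F\<^sub>n\<^sub>-\<^sub>1\<close>
  for one block \<open>b\<close>, and both \<open>F\<^sub>n F\<^sub>n\<^sub>-\<^sub>1\<close> and (up to short factors, when \<open>n \<le> 2\<close>)
  \<open>F\<^sub>n\<^sub>-\<^sub>1 F\<^sub>n\<^sub>-\<^sub>1 = F\<^sub>n F\<^sub>n\<^sub>-\<^sub>3\<close> are factors of \<open>F\<^sub>n F\<^sub>n\<close>, which is a window of the
  periodic word.\<close>

lemma rho_append: "rho (xs @ ys) = rho xs @ rho ys"
  by (simp add: rho_def)

lemma funpow_rho_append: "(rho ^^ n) (xs @ ys) = (rho ^^ n) xs @ (rho ^^ n) ys"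
  by (induction n) (simp_all add: rho_append)

lemma funpow_rho_Nil: "(rho ^^ n) [] = []"
  by (induction n) (simp_all add: rho_def)

lemma funpow_rho_eq_concat: "(rho ^^ n) w = concat (map (\<lambda>c. (rho ^^ n) [c]) w)"
proof (induction w)
  case (Cons c w)
  then show ?case using funpow_rho_append[of n "[c]" w] by simp
qed (simp add: funpow_rho_Nil)

lemma funpow_rho_A: "(rho ^^ n) [A] = Fib n"
  by (simp add: Fib_def)

lemma funpow_rho_B: "(rho ^^ Suc n) [B] = Fib n"
  by (simp add: Fib_def funpow_Suc_right rho_def del: funpow.simps)

lemma funpow_rho_letter: "(rho ^^ Suc n) [c] \<in> {Fib (Suc n), Fib n}"
  by (cases c) (simp_all only: funpow_rho_A funpow_rho_B insert_iff simp_thms)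

lemma Fib_0: "Fib 0 = [A]"
  by (simp add: Fib_def)

lemma Fib_1: "Fib (Suc 0) = [A, B]"
  by (simp add: Fib_def rho_def)

lemma Fib_add: "Fib (n + m) = concat (map (\<lambda>c. (rho ^^ n) [c]) (Fib m))"
  by (simp add: Fib_def funpow_add flip: funpow_rho_eq_concat)

lemma Fib_Suc_Suc: "Fib (Suc (Suc n)) = Fib (Suc n) @ Fib n"
  using Fib_add[of "Suc n" "Suc 0"]
  by (simp add: Fib_1 funpow_rho_A funpow_rho_B del: funpow.simps)

lemma Fib_2: "Fib 2 = [A, B, A]"
  using Fib_Suc_Suc[of 0] by (simp add: Fib_0 Fib_1 numeral_2_eq_2)

lemma prefix_Fib_Suc: "prefix (Fib n) (Fib (Suc n))"
  by (cases n) (simp_all add: Fib_0 Fib_1 Fib_Suc_Suc)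

lemma prefix_Fib_mono: "n \<le> m \<Longrightarrow> prefix (Fib n) (Fib m)"
  by (induction m rule: dec_induct) (auto intro: prefix_order.trans prefix_Fib_Suc)

lemma length_Fib_less_Suc: "length (Fib n) < length (Fib (Suc n))"
proof (cases n)
  case (Suc k)
  have "Fib k \<noteq> []"
    using prefix_Fib_mono[of 0 k] by (auto simp: Fib_0)
  then show ?thesis by (simp add: Suc Fib_Suc_Suc)
qed (simp add: Fib_0 Fib_1)

lemma length_Fib_gt: "n < length (Fib n)"
  by (induction n) (simp_all add: Fib_0 Suc_le_eq order.strict_trans1 length_Fib_less_Suc)

lemma Finf_eq_nth_Fib:
  assumes "i < length (Fib m)"
  shows "Finf i = Fib m ! i"
  unfolding Finf_def
proof (rule the_equality)
  have "i < length (Fib n) \<and> Fib n ! i = Fib m ! i" if "m \<le> n" for n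
    using prefix_Fib_mono[OF that] assms by (auto simp: prefix_def nth_append)
  then show "\<exists>N. \<forall>n\<ge>N. i < length (Fib n) \<and> Fib n ! i = Fib m ! i"
    by blast
next
  fix c
  assume "\<exists>N. \<forall>n\<ge>N. i < length (Fib n) \<and> Fib n ! i = c"
  then obtain N where "\<forall>n\<ge>N. Fib n ! i = c"
    by blast
  then have "Fib (max N m) ! i = c"
    by simp
  then show "c = Fib m ! i"
    using prefix_Fib_mono[of m "max N m"] assms by (auto simp: prefix_def nth_append)
qed

lemma subword_Finf_imp_sublist_Fib:
  assumes "subword_Finf S"
  obtains m where "sublist S (Fib m)"
proof -
  obtain k where k: "\<forall>i<length S. S ! i = Finf (k + i)"
    using assms unfolding subword_Finf_def by blast
  define m where "m = k + length S"
  have "m < length (Fib m)"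
    by (rule length_Fib_gt)
  then have "S = take (length S) (drop k (Fib m))"
    using k by (intro nth_equalityI) (simp_all add: m_def Finf_eq_nth_Fib)
  then show thesis
    by (metis that sublist_drop sublist_order.order.trans sublist_take)
qed

lemma sublist_Fib_mono: "sublist S (Fib n) \<Longrightarrow> n \<le> m \<Longrightarrow> sublist S (Fib m)"
  by (meson prefix_Fib_mono prefix_imp_sublist sublist_order.order.trans)

lemma sublist_concat_prefixed_blocks:
  assumes "sublist S (concat bs @ P)"
    and "length S \<le> length P"
    and "\<forall>b\<in>set bs. prefix P b"
  shows "sublist S P \<or> (\<exists>b\<in>set bs. sublist S (b @ P))"
  using assms
proof (induction bs)
  case (Cons b bs)
  have "prefix P (concat bs @ P)"
    using Cons.prems(3) by (cases bs) (auto intro: prefix_order.trans)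
  moreover have "sublist S b \<or> sublist S (concat bs @ P) \<or>
      (\<exists>S\<^sub>1 S\<^sub>2. S = S\<^sub>1 @ S\<^sub>2 \<and> suffix S\<^sub>1 b \<and> prefix S\<^sub>2 (concat bs @ P))"
    using Cons.prems(1) by (simp add: sublist_append)
  ultimately consider "sublist S b" | "sublist S (concat bs @ P)"
    | S\<^sub>1 S\<^sub>2 where "S = S\<^sub>1 @ S\<^sub>2" "suffix S\<^sub>1 b" "prefix S\<^sub>2 P"
    using Cons.prems(2) prefix_length_prefix[of _ "concat bs @ P" P] by fastforce
  then show ?case
  proof cases
    case 1
    then have "sublist S (b @ P)"
      by (meson sublist_append_rightI sublist_order.order.trans)
    then show ?thesis by simp
  next
    case 2
    then show ?thesis using Cons by auto
  next
    case 3
    then have "sublist S (b @ P)"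
      by (metis suffix_def prefix_def append.assoc sublist_appendI)
    then show ?thesis by simp
  qed
qed simp

lemma sublist_Fib_square:
  assumes "sublist S (Fib n @ Fib n)"
    and "length S \<le> length (Fib n)"
  shows "sublist S (Fib (Suc n) @ Fib (Suc n))"
proof -
  consider "n = 0" | "n = Suc 0" | q where "n = Suc (Suc q)"
    by (metis old.nat.exhaust)
  then show ?thesis
  proof cases
    case 1
    then have "length S \<le> 1" "sublist S [A, A]"
      using assms by (simp_all add: Fib_0)
    then show ?thesis
      using \<open>n = 0\<close> by (auto simp: Fib_1 sublist_Cons_right prefix_Cons)
  next
    case 2
    then have "length S \<le> 2" "sublist S [A, B, A, B]"
      using assms by (simp_all add: Fib_1)
    then show ?thesis
      using \<open>n = Suc 0\<close> Fib_2 by (auto simp: numeral_2_eq_2 sublist_Cons_right prefix_Cons)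
  next
    case (3 q)
    have "Fib n @ Fib n = Fib (Suc n) @ Fib q"
      by (simp add: 3 Fib_Suc_Suc)
    moreover have "prefix (Fib q) (Fib (Suc n))"
      using 3 by (simp add: prefix_Fib_mono)
    ultimately have "sublist (Fib n @ Fib n) (Fib (Suc n) @ Fib (Suc n))"
      by (auto simp: prefix_def)
    then show ?thesis
      using assms(1) by (rule sublist_order.order.trans[rotated])
  qed
qed

lemma short_sublist_Fib_imp_sublist_Fib_square:
  assumes "sublist S (Fib m)"
    and "length S \<le> length (Fib n)"
    and "Suc n \<le> m"
  shows "sublist S (Fib (Suc n) @ Fib (Suc n))"
proof -
  define bs where "bs = map (\<lambda>c. (rho ^^ Suc n) [c]) (Fib (m - Suc n))"
  have "Fib m = concat bs"
    using Fib_add[of "Suc n" "m - Suc n"] assms(3) by (simp add: bs_def)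
  moreover have blocks: "set bs \<subseteq> {Fib (Suc n), Fib n}"
    unfolding bs_def using funpow_rho_letter by auto
  ultimately have "sublist S (Fib n) \<or> (\<exists>b\<in>set bs. sublist S (b @ Fib n))"
    using assms(1,2) prefix_Fib_Suc[of n]
    by (intro sublist_concat_prefixed_blocks) (auto intro: sublist_order.order.trans)
  then have "sublist S (Fib (Suc n) @ Fib n) \<or> sublist S (Fib n @ Fib n)"
    using blocks prefix_Fib_Suc[of n]
    by (auto intro: sublist_order.order.trans prefix_imp_sublist simp: prefix_def)
  moreover have "sublist (Fib (Suc n) @ Fib n) (Fib (Suc n) @ Fib (Suc n))"
    using prefix_Fib_Suc[of n] by (auto simp: prefix_def)
  ultimately show ?thesis
    using assms(2) sublist_Fib_square sublist_order.order.trans by blast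
qed

lemma nth_append_self_mod:
  assumes "j < 2 * length w"
  shows "(w @ w) ! j = w ! (j mod length w)"
  using assms by (cases "j < length w") (simp_all add: nth_append le_mod_geq)

lemma periodic_word_of_nat: "periodic_word w (int j) = w ! (j mod length w)"
  by (simp add: periodic_word_def flip: of_nat_mod)

lemma sublist_square_imp_subword_periodic:
  assumes "sublist S (w @ w)"
  shows "subword_periodic S w"
proof -
  obtain p s where ps: "w @ w = p @ S @ s"
    using assms by (auto simp: sublist_def)
  have "S ! i = periodic_word w (int (length p) + int i)" if "i < length S" for i
  proof -
    have "S ! i = (w @ w) ! (length p + i)"
      using ps that by (simp add: nth_append)
    also have "\<dots> = w ! ((length p + i) mod length w)"
      using arg_cong[OF ps, of length] that by (intro nth_append_self_mod) simp
    finally show ?thesis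
      by (simp flip: periodic_word_of_nat)
  qed
  then show ?thesis
    unfolding subword_periodic_def by blast
qed

theorem lemma3p6:
  fixes S :: "letter list" and n :: nat
  assumes "subword_Finf S"
    and "n \<ge> 1"
    and "length S \<le> length (Fib (n - 1))"
  shows "subword_periodic S (Fib n)"
proof -
  obtain n' where n: "n = Suc n'"
    using assms(2) by (cases n) auto
  obtain m where "sublist S (Fib m)"
    using assms(1) by (rule subword_Finf_imp_sublist_Fib)
  then have "sublist S (Fib (n + m))"
    by (rule sublist_Fib_mono) simp
  moreover have "length S \<le> length (Fib n')"
    using assms(3) by (simp add: n)
  ultimately have "sublist S (Fib n @ Fib n)"
    unfolding n by (rule short_sublist_Fib_imp_sublist_Fib_square) simp
  then show ?thesis
    by (rule sublist_square_imp_subword_periodic)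
qed

end
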